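(* For every incentive compatible and individually rational mechanism $(f,p)$ there exists another incentive compatible and individually rational mechanism $(f',p')$ such that $\Pi(f',p')=\Pi(f,p)$ and $f'_1(v,k)=k\,f'_2(v,k)$ for all $(v,k)\in V\times K$.
   Context: An agent has private type $(v,k)\in V\times K$, $V=[0,1]$, $K=(0,1]$, and from an outcome $(a_1,a_2,t)$ with $a_1,a_2\in[0,1]$ (quantities of two divisible goods) and $t\in\mathbb{R}$ (payment by the agent) gets utility $U_{(v,k)}(a_1,a_2,t)=v\min\{a_1/k,a_2\}-t$. A mechanism is a pair $(f,p)$ with $f=(f_1,f_2):V\times K\to[0,1]^2$, $p:V\times K\to\mathbb{R}$. It is incentive compatible if $U_{(v,k)}(f(v,k),p(v,k))\ge U_{(v,k)}(f(v',k'),p(v',k'))$ for all types $(v,k),(v',k')$, and individually rational if $U_{(v,k)}(f(v,k),p(v,k))\ge0$ for all $(v,k)$. The type is distributed according to a joint distribution $G$ on $V\times K$ with strictly positive density, and the expected revenue of $(f,p)$ is $\Pi(f,p)=\int_{V\times K}p(v,k)\,dG(v,k)$. *)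

theory Defs
  imports "HOL-Probability.Probability"
begin

definition TypeSpace :: "(real \<times> real) set" where
  "TypeSpace = {0..1} \<times> {0<..1}"

definition U :: "real \<times> real \<Rightarrow> real \<times> real \<Rightarrow> real \<Rightarrow> real" where
  "U vk a t = fst vk * min (fst a / snd vk) (snd a) - t"

definition mechanism :: "(real \<times> real \<Rightarrow> real \<times> real) \<Rightarrow> (real \<times> real \<Rightarrow> real) \<Rightarrow> bool" where
  "mechanism f p \<longleftrightarrow> (\<forall>x\<in>TypeSpace. f x \<in> {0..1} \<times> {0..1})"

definition IC :: "(real \<times> real \<Rightarrow> real \<times> real) \<Rightarrow> (real \<times> real \<Rightarrow> real) \<Rightarrow> bool" where
  "IC f p \<longleftrightarrow> (\<forall>x\<in>TypeSpace. \<forall>y\<in>TypeSpace. U x (f x) (p x) \<ge> U x (f y) (p y))"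

definition IR :: "(real \<times> real \<Rightarrow> real \<times> real) \<Rightarrow> (real \<times> real \<Rightarrow> real) \<Rightarrow> bool" where
  "IR f p \<longleftrightarrow> (\<forall>x\<in>TypeSpace. U x (f x) (p x) \<ge> 0)"

definition type_distribution :: "(real \<times> real) measure \<Rightarrow> (real \<times> real \<Rightarrow> real) \<Rightarrow> bool" where
  "type_distribution G g \<longleftrightarrow>
     g \<in> borel_measurable borel \<and>
     (\<forall>x\<in>TypeSpace. 0 < g x) \<and> (\<forall>x. x \<notin> TypeSpace \<longrightarrow> g x = 0) \<and>
     G = density lborel (\<lambda>x. ennreal (g x)) \<and> prob_space G"

definition revenue :: "(real \<times> real) measure \<Rightarrow> (real \<times> real \<Rightarrow> real) \<Rightarrow> real" where
  "revenue G p = (\<integral>x. p x \<partial>G)"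

end

theory Submission
  imports Defs
begin

text \<open>A type (v,k) only values complete units of the Leontief bundle (k,1), so replacing every
  allocated bundle by the complete units it contains leaves each type's own utility unchanged.
  The replacement never adds goods, and utility is monotone in goods, so no misreport becomes
  more attractive: incentive compatibility, individual rationality and the payments, hence the
  revenue, all survive.\<close>

definition leontief_units :: "real \<Rightarrow> real \<times> real \<Rightarrow> real" where
  "leontief_units k a = min (fst a / k) (snd a)"

definition leontief_trim :: "real \<Rightarrow> real \<times> real \<Rightarrow> real \<times> real" where
  "leontief_trim k a = (k * leontief_units k a, leontief_units k a)"

lemma U_eq_units: "U x a t = fst x * leontief_units (snd x) a - t"
  by (simp add: U_def leontief_units_def)

lemma leontief_units_trim:
  assumes "k \<noteq> 0"
  shows "leontief_units k (leontief_trim k a) = leontief_units k a"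
  using assms by (simp add: leontief_trim_def leontief_units_def)

lemma leontief_units_mono:
  assumes "0 < k" "fst a \<le> fst b" "snd a \<le> snd b"
  shows "leontief_units k a \<le> leontief_units k b"
  using assms divide_right_mono[of "fst a" "fst b" k]
  by (auto simp: leontief_units_def min_def)

lemma U_mono:
  assumes "0 \<le> fst x" "0 < snd x" "fst a \<le> fst b" "snd a \<le> snd b"
  shows "U x a t \<le> U x b t"
  using assms leontief_units_mono[of "snd x" a b]
  by (simp add: U_eq_units mult_left_mono)

lemma leontief_trim_le:
  assumes "0 < k"
  shows "fst (leontief_trim k a) \<le> fst a" "snd (leontief_trim k a) \<le> snd a"
  using assms by (auto simp: leontief_trim_def leontief_units_def min_def field_simps)

lemma leontief_trim_nonneg:
  assumes "0 < k" "0 \<le> fst a" "0 \<le> snd a"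
  shows "0 \<le> fst (leontief_trim k a)" "0 \<le> snd (leontief_trim k a)"
  using assms by (auto simp: leontief_trim_def leontief_units_def)

lemma TypeSpaceD:
  assumes "x \<in> TypeSpace"
  shows "0 \<le> fst x" "0 < snd x"
  using assms by (auto simp: TypeSpace_def)

definition trim_mechanism :: "(real \<times> real \<Rightarrow> real \<times> real) \<Rightarrow> real \<times> real \<Rightarrow> real \<times> real" where
  "trim_mechanism f x = leontief_trim (snd x) (f x)"

lemma U_trim_mechanism_self:
  assumes "x \<in> TypeSpace"
  shows "U x (trim_mechanism f x) t = U x (f x) t"
  using TypeSpaceD[OF assms] by (simp add: U_eq_units trim_mechanism_def leontief_units_trim)

lemma U_trim_mechanism_le:
  assumes "x \<in> TypeSpace" "y \<in> TypeSpace"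
  shows "U x (trim_mechanism f y) t \<le> U x (f y) t"
  using TypeSpaceD[OF assms(1)] TypeSpaceD[OF assms(2)]
  by (intro U_mono) (simp_all add: trim_mechanism_def leontief_trim_le)

lemma mechanism_trim_mechanism:
  assumes "mechanism f p"
  shows "mechanism (trim_mechanism f) p"
  unfolding mechanism_def
proof
  fix x assume x: "x \<in> TypeSpace"
  then have "f x \<in> {0..1} \<times> {0..1}"
    using assms by (simp add: mechanism_def)
  with TypeSpaceD(2)[OF x] show "trim_mechanism f x \<in> {0..1} \<times> {0..1}"
    using leontief_trim_le[of "snd x" "f x"] leontief_trim_nonneg[of "snd x" "f x"]
    by (auto simp: trim_mechanism_def mem_Times_iff)
qed

lemma IC_trim_mechanism:
  assumes "IC f p"
  shows "IC (trim_mechanism f) p"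
  unfolding IC_def
proof (intro ballI)
  fix x y assume x: "x \<in> TypeSpace" and y: "y \<in> TypeSpace"
  have "U x (trim_mechanism f y) (p y) \<le> U x (f y) (p y)"
    using x y by (rule U_trim_mechanism_le)
  also have "\<dots> \<le> U x (f x) (p x)"
    using assms x y by (simp add: IC_def)
  also have "\<dots> = U x (trim_mechanism f x) (p x)"
    using x by (simp add: U_trim_mechanism_self)
  finally show "U x (trim_mechanism f y) (p y) \<le> U x (trim_mechanism f x) (p x)" .
qed

lemma IR_trim_mechanism:
  assumes "IR f p"
  shows "IR (trim_mechanism f) p"
  using assms by (simp add: IR_def U_trim_mechanism_self)

theorem proposition2:
  fixes G :: "(real \<times> real) measure" and g :: "real \<times> real \<Rightarrow> real"
    and f :: "real \<times> real \<Rightarrow> real \<times> real" and p :: "real \<times> real \<Rightarrow> real"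
  assumes "type_distribution G g"
    and "mechanism f p" and "IC f p" and "IR f p"
  shows "\<exists>f' p'. mechanism f' p' \<and> IC f' p' \<and> IR f' p' \<and>
           revenue G p' = revenue G p \<and>
           (\<forall>x\<in>TypeSpace. fst (f' x) = snd x * snd (f' x))"
proof (intro exI conjI)
  show "mechanism (trim_mechanism f) p" using assms(2) by (rule mechanism_trim_mechanism)
  show "IC (trim_mechanism f) p" using assms(3) by (rule IC_trim_mechanism)
  show "IR (trim_mechanism f) p" using assms(4) by (rule IR_trim_mechanism)
  show "revenue G p = revenue G p" ..
  show "\<forall>x\<in>TypeSpace. fst (trim_mechanism f x) = snd x * snd (trim_mechanism f x)"
    by (simp add: trim_mechanism_def leontief_trim_def)
qed

end
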